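(* Let $F$ be the 0-1 loss $F(z)=\mathbb{1}(z<0)$, the hinge loss $F(z)=(1-z)_+$, or the psi-loss $F(z)=2\min(1,(1-z)_+)$. Let $(\boldsymbol X_i,Y_i)_{i\in[n]}$ be an arbitrary sample with $\boldsymbol X_i\in\mathbb{R}^{d_1\times d_2}$, $\|\boldsymbol X_i\|_F\le1$, $Y_i\in\mathbb{R}$, and let $\pi\in\mathbb{R}$, $\lambda\ge0$. Consider $$\min_{(\boldsymbol B,b):\ \mathrm{rank}(\boldsymbol B)\le r,\ \mathrm{supp}(\boldsymbol B)\le(s_1,s_2)}\ \frac1n\sum_{i=1}^n|Y_i-\pi|\,F\big([\langle\boldsymbol X_i,\boldsymbol B\rangle+b]\,\mathrm{sgn}(Y_i-\pi)\big)+\lambda\|\boldsymbol B\|_F^2 .$$ If this problem admits a global optimizer, then there exists a global optimizer $(\boldsymbol B_{\mathrm{opt}},b_{\mathrm{opt}})$ with $|b_{\mathrm{opt}}|\le\|\boldsymbol B_{\mathrm{opt}}\|_F+1$.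
   Context: $\mathrm{sgn}(x)=1$ if $x>0$, $-1$ otherwise. $\langle\boldsymbol X,\boldsymbol B\rangle=\mathrm{tr}(\boldsymbol X\boldsymbol B^T)$. $\mathrm{supp}(\boldsymbol B)\le(s_1,s_2)$ means $\boldsymbol B$ has at most $s_1$ nonzero rows and at most $s_2$ nonzero columns. $z_+=\max(z,0)$. *)

theory Defs
  imports "HOL-Analysis.Analysis"
begin

text \<open>Sign convention of the paper: sgn(x) = 1 if x > 0, and -1 otherwise.\<close>
definition sgnp :: "real \<Rightarrow> real" where
  "sgnp x = (if x > 0 then 1 else -1)"

definition zero_one_loss :: "real \<Rightarrow> real" where
  "zero_one_loss z = (if z < 0 then 1 else 0)"

definition hinge_loss :: "real \<Rightarrow> real" where
  "hinge_loss z = max (1 - z) 0"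

definition psi_loss :: "real \<Rightarrow> real" where
  "psi_loss z = 2 * min 1 (max (1 - z) 0)"

text \<open>Matrices in R^(d1 x d2) are elements of real^'d2^'d1 (row index 'd1).\<close>
definition frob_inner :: "real^'c^'r \<Rightarrow> real^'c^'r \<Rightarrow> real" where
  "frob_inner X B = (\<Sum>i\<in>UNIV. \<Sum>j\<in>UNIV. X $ i $ j * B $ i $ j)"

definition frob_norm :: "real^'c^'r \<Rightarrow> real" where
  "frob_norm B = sqrt (\<Sum>i\<in>UNIV. \<Sum>j\<in>UNIV. (B $ i $ j)\<^sup>2)"

definition nonzero_rows :: "real^'c^'r \<Rightarrow> 'r set" where
  "nonzero_rows B = {i. \<exists>j. B $ i $ j \<noteq> 0}"

definition nonzero_cols :: "real^'c^'r \<Rightarrow> 'c set" where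
  "nonzero_cols B = {j. \<exists>i. B $ i $ j \<noteq> 0}"

definition supp_le :: "real^'c^'r \<Rightarrow> nat \<Rightarrow> nat \<Rightarrow> bool" where
  "supp_le B s1 s2 \<longleftrightarrow> card (nonzero_rows B) \<le> s1 \<and> card (nonzero_cols B) \<le> s2"

definition feasible :: "nat \<Rightarrow> nat \<Rightarrow> nat \<Rightarrow> real^'c^'r \<Rightarrow> bool" where
  "feasible r s1 s2 B \<longleftrightarrow> rank B \<le> r \<and> supp_le B s1 s2"

definition objective ::
  "(real \<Rightarrow> real) \<Rightarrow> nat \<Rightarrow> (nat \<Rightarrow> real^'c^'r) \<Rightarrow> (nat \<Rightarrow> real) \<Rightarrow> real \<Rightarrow> real
     \<Rightarrow> real^'c^'r \<Rightarrow> real \<Rightarrow> real" where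
  "objective F n X Y \<pi> lam B b =
     (1 / real n) * (\<Sum>i=1..n. \<bar>Y i - \<pi>\<bar> * F ((frob_inner (X i) B + b) * sgnp (Y i - \<pi>)))
     + lam * (frob_norm B)\<^sup>2"

definition is_global_opt ::
  "(real \<Rightarrow> real) \<Rightarrow> nat \<Rightarrow> (nat \<Rightarrow> real^'c^'r) \<Rightarrow> (nat \<Rightarrow> real) \<Rightarrow> real \<Rightarrow> real
     \<Rightarrow> nat \<Rightarrow> nat \<Rightarrow> nat \<Rightarrow> real^'c^'r \<Rightarrow> real \<Rightarrow> bool" where
  "is_global_opt F n X Y \<pi> lam r s1 s2 B b \<longleftrightarrow>
     feasible r s1 s2 B \<and>
     (\<forall>B' b'. feasible r s1 s2 B' \<longrightarrow>
        objective F n X Y \<pi> lam B b \<le> objective F n X Y \<pi> lam B' b')"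

end

theory Submission
  imports Defs
begin

text \<open>
  Cauchy-Schwarz and \<open>\<parallel>X\<^sub>i\<parallel>\<^sub>F \<le> 1\<close> give \<open>\<bar>\<langle>X\<^sub>i, B\<rangle>\<bar> \<le> \<parallel>B\<parallel>\<^sub>F\<close>.
  Hence, once \<open>\<bar>b\<bar> > \<parallel>B\<parallel>\<^sub>F + 1\<close>, every margin \<open>(\<langle>X\<^sub>i, B\<rangle> + b) sgn(Y\<^sub>i - \<pi>)\<close> is either
  \<open>\<ge> 1\<close>, where the loss vanishes, or already \<open>\<le> -1\<close>. Clamping \<open>b\<close> to
  \<open>[-(\<parallel>B\<parallel>\<^sub>F + 1), \<parallel>B\<parallel>\<^sub>F + 1]\<close> keeps the first kind of margin \<open>\<ge> 1\<close> and can only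
  increase the second kind, so for a non-increasing loss vanishing on \<open>[1, \<infinity>)\<close> the
  objective does not increase and the clamped pair is again a global optimizer. Since
  \<open>B\<close> is unchanged.
\<close>

lemma frob_inner_eq_inner: "frob_inner X B = inner X B"
  by (simp add: frob_inner_def inner_vec_def)

lemma frob_norm_eq_norm: "frob_norm B = norm B"
  by (simp add: frob_norm_def norm_eq_sqrt_inner inner_vec_def power2_eq_square)

lemma abs_frob_inner_le: "\<bar>frob_inner X B\<bar> \<le> frob_norm X * frob_norm B"
  unfolding frob_inner_eq_inner frob_norm_eq_norm by (rule Cauchy_Schwarz_ineq2)

lemma antimono_losses: "antimono zero_one_loss" "antimono hinge_loss" "antimono psi_loss"
  by (auto intro!: antimonoI simp: zero_one_loss_def hinge_loss_def psi_loss_def)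

lemma losses_vanish:
  assumes "z \<ge> 1"
  shows "zero_one_loss z = 0" "hinge_loss z = 0" "psi_loss z = 0"
  using assms by (auto simp: zero_one_loss_def hinge_loss_def psi_loss_def)

lemma clamped_margin_loss_le:
  fixes F :: "real \<Rightarrow> real"
  assumes F_anti: "antimono F" and F_vanish: "\<And>z. z \<ge> 1 \<Longrightarrow> F z = 0"
    and a: "\<bar>a\<bar> \<le> M" and s: "s = 1 \<or> s = -1"
  shows "F ((a + max (-(M + 1)) (min (M + 1) b)) * s) \<le> F ((a + b) * s)"
proof -
  have F_nonneg: "F z \<ge> 0" for z
    using antimonoD[OF F_anti, of z "max z 1"] F_vanish[of "max z 1"] by simp
  have F_le: "F z' \<le> F z" if "z' \<ge> 1 \<or> z \<le> z'" for z z'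
    using that F_nonneg F_vanish antimonoD[OF F_anti] by metis
  let ?c = "max (-(M + 1)) (min (M + 1) b)"
  consider "b > M + 1" | "b < -(M + 1)" | "?c = b"
    by linarith
  then show ?thesis
  proof cases
    case 1
    then have "?c = M + 1" "(a + ?c) * s \<ge> 1 \<or> (a + b) * s \<le> (a + ?c) * s"
      using a s by (auto simp: abs_le_iff)
    then show ?thesis by (intro F_le) simp
  next
    case 2
    then have "?c = -(M + 1)" "(a + ?c) * s \<ge> 1 \<or> (a + b) * s \<le> (a + ?c) * s"
      using a s by (auto simp: abs_le_iff)
    then show ?thesis by (intro F_le) simp
  qed simp
qed

lemma objective_clamp_offset_le:
  fixes F :: "real \<Rightarrow> real" and X :: "nat \<Rightarrow> real^'c^'r" and B :: "real^'c^'r"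
  assumes "antimono F" and "\<And>z. z \<ge> 1 \<Longrightarrow> F z = 0"
    and Xn: "\<forall>i\<in>{1..n}. frob_norm (X i) \<le> 1"
  defines "M \<equiv> frob_norm B"
  shows "objective F n X Y \<pi> lam B (max (-(M + 1)) (min (M + 1) b))
           \<le> objective F n X Y \<pi> lam B b"
proof -
  have margin: "\<bar>frob_inner (X i) B\<bar> \<le> M" if "i \<in> {1..n}" for i
  proof -
    have "\<bar>frob_inner (X i) B\<bar> \<le> frob_norm (X i) * M"
      unfolding M_def by (rule abs_frob_inner_le)
    also have "\<dots> \<le> M"
      using Xn that mult_right_mono[of "frob_norm (X i)" 1 M]
      by (simp add: M_def frob_norm_eq_norm)
    finally show ?thesis .
  qed
  have sign: "sgnp x = 1 \<or> sgnp x = -1" for x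
    by (simp add: sgnp_def)
  show ?thesis
    unfolding objective_def
    by (intro add_right_mono mult_left_mono sum_mono
          clamped_margin_loss_le[OF assms(1,2) margin sign]) auto
qed

theorem lemma1:
  fixes F :: "real \<Rightarrow> real" and n :: nat
    and X :: "nat \<Rightarrow> real^'d2^'d1" and Y :: "nat \<Rightarrow> real"
    and \<pi> lam :: real and r s1 s2 :: nat
  assumes F: "F = zero_one_loss \<or> F = hinge_loss \<or> F = psi_loss"
    and Xn: "\<forall>i\<in>{1..n}. frob_norm (X i) \<le> 1"
    and lam: "lam \<ge> 0"
    and ex: "\<exists>B b. is_global_opt F n X Y \<pi> lam r s1 s2 B b"
  shows "\<exists>B b. is_global_opt F n X Y \<pi> lam r s1 s2 B b \<and> \<bar>b\<bar> \<le> frob_norm B + 1"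
proof -
  obtain B b where opt: "is_global_opt F n X Y \<pi> lam r s1 s2 B b"
    using ex by blast
  define M where "M = frob_norm B"
  define c where "c = max (-(M + 1)) (min (M + 1) b)"
  have "antimono F" and "\<And>z. z \<ge> 1 \<Longrightarrow> F z = 0"
    using F antimono_losses losses_vanish by auto
  then have "objective F n X Y \<pi> lam B c \<le> objective F n X Y \<pi> lam B b"
    unfolding c_def M_def using Xn by (rule objective_clamp_offset_le)
  then have "is_global_opt F n X Y \<pi> lam r s1 s2 B c"
    using opt unfolding is_global_opt_def by (meson order_trans)
  moreover have "\<bar>c\<bar> \<le> frob_norm B + 1"
    using norm_ge_zero[of B] unfolding c_def M_def frob_norm_eq_norm by arith
  ultimately show ?thesis by blast
qed

end
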